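(* Let $(\mathcal A,\phi)$ be a noncommutative probability space with an exchangeability system whose copies are indexed by $k\in\{0,1,2,\dots\}$, and let $X_1,\dots,X_n\in\mathcal A$. Then $$\phi(X_1X_2\cdots X_n)=\sum_{\substack{A\subseteq[n]\\ 1\in A}}\frac{1}{|A|}\,\tilde\phi(X_1^{A,\omega}X_2^{A,\omega}\cdots X_n^{A,\omega}),$$ where for each $A$, $\omega$ is a primitive root of unity of order $|A|$ and $X_j^{A,\omega}=\sum_{k=1}^{|A|}\omega^kX_j^{(k)}$ if $j\in A$, and $X_j^{A,\omega}=X_j^{(0)}$ if $j\notin A$.
   Context: A noncommutative probability space is a pair $(\mathcal A,\phi)$ of a complex unital algebra $\mathcal A$ and a unital linear functional $\phi$. An exchangeability system for $(\mathcal A,\phi)$ here consists of a noncommutative probability space $(\mathcal U,\tilde\phi)$ and a family $(\iota_k)_{k\ge0}$ of embeddings (injective unital algebra homomorphisms) $\iota_k:\mathcal A\to\mathcal U$ with $\tilde\phi\circ\iota_k=\phi$; write $X^{(k)}=\iota_k(X)$. It is required that for all $X_1,\dots,X_n\in\mathcal A$, all indices $i_1,\dots,i_n\ge0$ and every bijection $\sigma$ of $\{0,1,2,\dots\}$, $\tilde\phi(X_1^{(i_1)}\cdots X_n^{(i_n)})=\tilde\phi(X_1^{(\sigma(i_1))}\cdots X_n^{(\sigma(i_n))})$. *)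

theory Defs
  imports Complex_Main
begin

definition complex_unital_algebra :: "(complex \<Rightarrow> 'a::ring_1 \<Rightarrow> 'a) \<Rightarrow> bool" where
  "complex_unital_algebra sc \<longleftrightarrow> vector_space sc \<and>
     (\<forall>c a b. sc c (a * b) = sc c a * b \<and> sc c (a * b) = a * sc c b)"

definition nc_prob_space :: "(complex \<Rightarrow> 'a::ring_1 \<Rightarrow> 'a) \<Rightarrow> ('a \<Rightarrow> complex) \<Rightarrow> bool" where
  "nc_prob_space sc phi \<longleftrightarrow> complex_unital_algebra sc \<and> Vector_Spaces.linear sc (*) phi \<and> phi 1 = 1"

definition unital_alg_embedding ::
  "(complex \<Rightarrow> 'a::ring_1 \<Rightarrow> 'a) \<Rightarrow> (complex \<Rightarrow> 'u::ring_1 \<Rightarrow> 'u) \<Rightarrow> ('a \<Rightarrow> 'u) \<Rightarrow> bool" where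
  "unital_alg_embedding scA scU f \<longleftrightarrow> Vector_Spaces.linear scA scU f \<and>
     (\<forall>a b. f (a * b) = f a * f b) \<and> f 1 = 1 \<and> inj f"

definition exchangeability_system ::
  "(complex \<Rightarrow> 'a::ring_1 \<Rightarrow> 'a) \<Rightarrow> ('a \<Rightarrow> complex) \<Rightarrow>
   (complex \<Rightarrow> 'u::ring_1 \<Rightarrow> 'u) \<Rightarrow> ('u \<Rightarrow> complex) \<Rightarrow> (nat \<Rightarrow> 'a \<Rightarrow> 'u) \<Rightarrow> bool" where
  "exchangeability_system scA phi scU phit iota \<longleftrightarrow>
     nc_prob_space scU phit \<and>
     (\<forall>k. unital_alg_embedding scA scU (iota k) \<and> phit \<circ> iota k = phi) \<and>
     (\<forall>(n::nat) (X::nat \<Rightarrow> 'a) (i::nat \<Rightarrow> nat) (\<sigma>::nat \<Rightarrow> nat). bij \<sigma> \<longrightarrow>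
        phit (prod_list (map (\<lambda>j. iota (i j) (X j)) [0..<n])) =
        phit (prod_list (map (\<lambda>j. iota (\<sigma> (i j)) (X j)) [0..<n])))"

definition primitive_root_unity :: "nat \<Rightarrow> complex \<Rightarrow> bool" where
  "primitive_root_unity m w \<longleftrightarrow> w ^ m = 1 \<and> (\<forall>k. 0 < k \<and> k < m \<longrightarrow> w ^ k \<noteq> 1)"

definition XA :: "(complex \<Rightarrow> 'u \<Rightarrow> 'u::ring_1) \<Rightarrow> (nat \<Rightarrow> 'a \<Rightarrow> 'u) \<Rightarrow> nat set \<Rightarrow> complex \<Rightarrow> 'a \<Rightarrow> nat \<Rightarrow> 'u" where
  "XA scU iota A w x j = (if j \<in> A then (\<Sum>k = 1..card A. scU (w ^ k) (iota k x)) else iota 0 x)"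

end

theory Submission
  imports Defs "HOL-Library.FuncSet" "HOL-Combinatorics.Permutations"
begin

text \<open>Expanding every factor X_j^{A,omega} by multilinearity turns the right-hand side into a sum
over labellings kappa of [n] by copy indices, weighted by omega^(sum of kappa over A), of the
moments of X_1^(kappa 1) ... X_n^(kappa n). By exchangeability such a moment only depends on the
kernel partition of kappa, so it suffices that for every partition pi of [n] the total weight of
the labellings with kernel pi is 1 if pi has a single block and 0 otherwise.

A labelling occurs for A only if it vanishes exactly off A, so [n] - A is empty or a block of pi,
and the r blocks inside A carry distinct labels in {1..|A|}. Since the powers of a nontrivial
|A|-th root of unity sum to 0, the weighted count of these injective labellings is
(-1)^(r-1) (r-1)! |A|. If pi has s blocks, the admissible sets A are [n] (with r = s) and the
s - 1 complements of blocks avoiding 1 (with r = s - 1); the resulting total weight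
(-1)^(s-1) (s-1)! + (s-1) (-1)^(s-2) (s-2)! vanishes unless s = 1.\<close>

lemma inj_on_extends_to_bij:
  fixes f :: "'a \<Rightarrow> 'a"
  assumes "finite F" and "inj_on f F"
  obtains \<sigma> where "bij \<sigma>" and "\<And>x. x \<in> F \<Longrightarrow> \<sigma> x = f x"
proof -
  define U where "U = F \<union> f ` F"
  have "finite U" using assms(1) by (simp add: U_def)
  moreover have "card (U - F) = card (U - f ` F)"
    using assms \<open>finite U\<close> by (simp add: U_def card_Diff_subset card_image)
  ultimately obtain h where h: "bij_betw h (U - F) (U - f ` F)"
    using finite_same_card_bij by blast
  define \<sigma> where "\<sigma> x = (if x \<in> F then f x else if x \<in> U then h x else x)" for x
  have "bij_betw \<sigma> F (f ` F)"
    using assms(2) by (auto simp: bij_betw_def \<sigma>_def inj_on_def)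
  moreover have "bij_betw \<sigma> (U - F) (U - f ` F)"
    using h by (rule bij_betw_cong[THEN iffD1, rotated]) (auto simp: \<sigma>_def)
  ultimately have "bij_betw \<sigma> (F \<union> (U - F)) (f ` F \<union> (U - f ` F))"
    by (rule bij_betw_combine) auto
  then have "\<sigma> permutes U"
    by (intro bij_imp_permutes) (auto simp: U_def \<sigma>_def Un_absorb1)
  show thesis
  proof (rule that)
    show "bij \<sigma>" using \<open>\<sigma> permutes U\<close> by (rule permutes_bij)
  qed (simp add: \<sigma>_def)
qed

lemma prod_list_map_sum_distrib:
  fixes f :: "'b \<Rightarrow> 'c \<Rightarrow> 'a::semiring_1"
  assumes "distinct js"
  shows "prod_list (map (\<lambda>j. \<Sum>k\<in>S j. f j k) js) =
    (\<Sum>\<kappa>\<in>PiE (set js) S. prod_list (map (\<lambda>j. f j (\<kappa> j)) js))"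
  using assms
proof (induction js)
  case Nil
  then show ?case by simp
next
  case (Cons j js)
  then have j: "j \<notin> set js" by simp
  have "(\<Sum>\<kappa>\<in>PiE (set (j # js)) S. prod_list (map (\<lambda>i. f i (\<kappa> i)) (j # js)))
     = (\<Sum>(k, \<kappa>)\<in>S j \<times> PiE (set js) S. prod_list (map (\<lambda>i. f i ((\<kappa>(j := k)) i)) (j # js)))"
    unfolding set_simps PiE_insert_eq
    by (subst sum.reindex) (auto intro: inj_combinator[OF j] simp: case_prod_beta)
  also have "\<dots> = (\<Sum>(k, \<kappa>)\<in>S j \<times> PiE (set js) S. f j k * prod_list (map (\<lambda>i. f i (\<kappa> i)) js))"
  proof -
    have "map (\<lambda>i. f i ((\<kappa>(j := k)) i)) js = map (\<lambda>i. f i (\<kappa> i)) js" for \<kappa> k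
      using j by (intro map_cong) auto
    then show ?thesis by (simp only: list.map prod_list.Cons fun_upd_same)
  qed
  also have "\<dots> = (\<Sum>k\<in>S j. f j k) * (\<Sum>\<kappa>\<in>PiE (set js) S. prod_list (map (\<lambda>i. f i (\<kappa> i)) js))"
    by (simp add: sum.cartesian_product[symmetric] sum_distrib_left sum_distrib_right sum.swap[of _ "S j"])
  finally show ?case using Cons by simp
qed

lemma sum_fun_upd_add:
  fixes b :: "'a \<Rightarrow> 'b::comm_semiring_1"
  assumes "finite T" and "t \<in> T"
  shows "(\<Sum>u\<in>T. (b(t := b t + d)) u * c u) = (\<Sum>u\<in>T. b u * c u) + d * c t"
proof -
  have "(\<Sum>u\<in>T. (b(t := b t + d)) u * c u) = (\<Sum>u\<in>T. b u * c u + (if u = t then d * c t else 0))"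
    by (intro sum.cong) (auto simp: distrib_right)
  then show ?thesis using assms by (simp add: sum.distrib)
qed

section \<open>Injective labellings weighted by roots of unity\<close>

definition injections :: "'a set \<Rightarrow> nat \<Rightarrow> ('a \<Rightarrow> nat) set" where
  "injections T m = {c \<in> T \<rightarrow>\<^sub>E {1..m}. inj_on c T}"

lemma finite_injections: "finite T \<Longrightarrow> finite (injections T m)"
  unfolding injections_def by (rule finite_subset[OF _ finite_PiE[of T "\<lambda>_. {1..m}"]]) auto

lemma sum_injections_insert:
  assumes "x \<notin> T" and "finite T"
  shows "sum F (injections (insert x T) m) = (\<Sum>c\<in>injections T m. \<Sum>v\<in>{1..m} - c ` T. F (c(x := v)))"
proof -
  have "(\<Sum>c\<in>injections T m. \<Sum>v\<in>{1..m} - c ` T. F (c(x := v))) =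
        (\<Sum>(c, v)\<in>Sigma (injections T m) (\<lambda>c. {1..m} - c ` T). F (c(x := v)))"
    by (subst sum.Sigma) (auto simp: finite_injections assms)
  also have "\<dots> = sum F (injections (insert x T) m)"
  proof (rule sum.reindex_bij_witness[where i = "\<lambda>c. (c(x := undefined), c x)" and j = "\<lambda>(c, v). c(x := v)"])
    fix p assume "p \<in> Sigma (injections T m) (\<lambda>c. {1..m} - c ` T)"
    moreover obtain c v where p: "p = (c, v)" by fastforce
    ultimately have c: "c \<in> T \<rightarrow>\<^sub>E {1..m}" "inj_on c T" and v: "v \<in> {1..m}" "v \<notin> c ` T"
      by (auto simp: injections_def)
    have "c x = undefined" using c(1) assms(1) by (auto simp: PiE_def extensional_def)
    then show "(\<lambda>c. (c(x := undefined), c x)) ((\<lambda>(c, v). c(x := v)) p) = p"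
      by (simp add: p fun_upd_idem)
    have "inj_on (c(x := v)) (insert x T)"
      using c(2) v(2) assms(1) by (auto simp: inj_on_def)
    then show "(\<lambda>(c, v). c(x := v)) p \<in> injections (insert x T) m"
      using PiE_fun_upd[OF v(1) c(1)] by (simp add: p injections_def)
  next
    fix c assume c: "c \<in> injections (insert x T) m"
    then have "c(x := undefined) \<in> T \<rightarrow>\<^sub>E {1..m}" "inj_on (c(x := undefined)) T" "c x \<in> {1..m}"
      "c x \<notin> c ` T"
      using assms(1) by (auto simp: injections_def inj_on_def PiE_def Pi_def extensional_def)
    moreover have "(c(x := undefined)) ` T = c ` T" using assms(1) by auto
    ultimately show "(\<lambda>c. (c(x := undefined), c x)) c \<in> Sigma (injections T m) (\<lambda>c. {1..m} - c ` T)"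
      by (simp add: injections_def)
  qed auto
  finally show ?thesis by simp
qed

lemma sum_primitive_root_powers_eq_0:
  assumes "primitive_root_unity m w" and "0 < k" and "k < m"
  shows "(\<Sum>v\<in>{1..m}. (w ^ k) ^ v) = 0"
proof -
  have "w ^ k \<noteq> 1" and "(w ^ k) ^ m = 1"
    using assms by (auto simp: primitive_root_unity_def simp flip: power_mult)
      (metis mult.commute power_mult power_one)
  then have "(\<Sum>v<m. (w ^ k) ^ v) = 0" by (simp add: geometric_sum)
  then show ?thesis
    by (simp add: sum.atLeast1_atMost_eq sum_distrib_left[symmetric])
qed

text \<open>Fix the label v of one element x of T. It ranges over the labels not used on the rest T',
and since 0 < b x < m the powers (w ^ b x) ^ v over all labels sum to 0, so the sum over the
unused labels is minus the sum over the used ones. This merges x into one of the elements of T',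
which reduces r by one.\<close>

lemma sum_injections_weighted_root_power:
  assumes w: "primitive_root_unity m w"
    and "finite T" and "card T = Suc r" and "\<forall>t\<in>T. 0 < b t" and "(\<Sum>t\<in>T. b t) = m"
  shows "(\<Sum>c\<in>injections T m. w ^ (\<Sum>t\<in>T. b t * c t)) = (-1) ^ r * fact r * of_nat m"
  using assms(2-5)
proof (induction r arbitrary: T b)
  case 0
  then obtain x where T: "T = {x}" and "b x = m" by (auto simp: card_Suc_eq)
  moreover have "w ^ m = 1" using w by (simp add: primitive_root_unity_def)
  moreover have "injections {x} m = {x} \<rightarrow>\<^sub>E {1..m}" by (auto simp: injections_def)
  ultimately show ?case by (simp add: power_mult card_PiE)
next
  case (Suc r)
  then obtain x T' where T: "T = insert x T'" and x: "x \<notin> T'" and T': "finite T'" "card T' = Suc r"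
    by (metis card_Suc_eq finite_insert)
  then have "0 < (\<Sum>t\<in>T'. b t)" using Suc.prems(3) by (intro sum_pos) auto
  moreover have "b x + (\<Sum>t\<in>T'. b t) = m" using Suc.prems(4) T x T' by simp
  ultimately have bx: "0 < b x" "b x < m" using Suc.prems(3) T by auto
  let ?s = "\<lambda>c. \<Sum>t\<in>T'. b t * c t"
  have "(\<Sum>c\<in>injections T m. w ^ (\<Sum>t\<in>T. b t * c t)) =
        (\<Sum>c\<in>injections T' m. \<Sum>v\<in>{1..m} - c ` T'. w ^ ?s c * (w ^ b x) ^ v)"
  proof -
    have "(\<Sum>t\<in>T'. b t * (c(x := v)) t) = ?s c" for c v
      using x by (intro sum.cong) auto
    then have "(\<Sum>t\<in>T. b t * (c(x := v)) t) = b x * v + ?s c" for c v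
      using T x T' by simp
    then show ?thesis
      unfolding T sum_injections_insert[OF x T'(1)] by (simp add: power_add ac_simps flip: power_mult)
  qed
  also have "\<dots> = (\<Sum>c\<in>injections T' m. - (\<Sum>t\<in>T'. w ^ ?s c * (w ^ b x) ^ c t))"
  proof (intro sum.cong refl)
    fix c assume "c \<in> injections T' m"
    then have "c ` T' \<subseteq> {1..m}" and "inj_on c T'" by (auto simp: injections_def)
    then have "(\<Sum>v\<in>{1..m} - c ` T'. (w ^ b x) ^ v) = - (\<Sum>t\<in>T'. (w ^ b x) ^ c t)"
      using sum_primitive_root_powers_eq_0[OF w bx] by (simp add: sum_diff sum.reindex)
    then show "(\<Sum>v\<in>{1..m} - c ` T'. w ^ ?s c * (w ^ b x) ^ v) = - (\<Sum>t\<in>T'. w ^ ?s c * (w ^ b x) ^ c t)"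
      by (simp flip: sum_distrib_left)
  qed
  also have "\<dots> = - (\<Sum>t\<in>T'. \<Sum>c\<in>injections T' m. w ^ (\<Sum>u\<in>T'. (b(t := b t + b x)) u * c u))"
  proof -
    have "w ^ ?s c * (w ^ b x) ^ c t = w ^ (\<Sum>u\<in>T'. (b(t := b t + b x)) u * c u)" if "t \<in> T'" for t c
      unfolding sum_fun_upd_add[OF T'(1) that] by (simp add: power_add power_mult)
    then show ?thesis by (simp add: sum_negf sum.swap[of _ T'])
  qed
  also have "\<dots> = - (\<Sum>t\<in>T'. (-1) ^ r * fact r * of_nat m)"
  proof (intro arg_cong[where f = uminus] sum.cong refl Suc.IH[OF T'])
    fix t assume "t \<in> T'"
    then show "\<forall>u\<in>T'. 0 < (b(t := b t + b x)) u" using Suc.prems(3) T by auto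
    show "(\<Sum>u\<in>T'. (b(t := b t + b x)) u) = m"
      using sum_fun_upd_add[OF T'(1) \<open>t \<in> T'\<close>, of b "b x" "\<lambda>_. 1"] \<open>b x + (\<Sum>t\<in>T'. b t) = m\<close>
      by simp
  qed
  also have "\<dots> = (-1) ^ Suc r * fact (Suc r) * of_nat m"
    using T' by (simp add: algebra_simps)
  finally show ?case .
qed

section \<open>Labellings with a prescribed kernel\<close>

definition kernel_on :: "'a set \<Rightarrow> ('a \<Rightarrow> 'b) \<Rightarrow> ('a \<times> 'a) set" where
  "kernel_on I f = {(i, j) \<in> I \<times> I. f i = f j}"

lemma equiv_kernel_on: "equiv I (kernel_on I f)"
  by (auto simp: equiv_def kernel_on_def refl_on_def sym_def trans_def)

lemma kernel_on_const: "kernel_on I (\<lambda>_. c) = I \<times> I"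
  by (auto simp: kernel_on_def)

lemma kernel_on_restrict: "kernel_on I (restrict f I) = kernel_on I f"
  by (auto simp: kernel_on_def)

lemma the_elem_image_kernel_on_class:
  assumes "j \<in> I"
  shows "the_elem (f ` (kernel_on I f `` {j})) = f j"
proof -
  have "f ` (kernel_on I f `` {j}) = {f j}"
    using assms by (auto simp: kernel_on_def)
  then show ?thesis by simp
qed

text \<open>The copy indices k that occur in XA A w x j.\<close>

definition copy_indices :: "nat set \<Rightarrow> nat \<Rightarrow> nat set" where
  "copy_indices A j = (if j \<in> A then {1..card A} else {0})"

lemma copy_indices_complement_class:
  assumes "\<kappa> \<in> PiE I (copy_indices A)" and "A \<subseteq> I"
  shows "A = I \<or> I - A \<in> I // kernel_on I \<kappa>"
proof (cases "A = I")
  case False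
  with assms(2) obtain d where d: "d \<in> I - A" by blast
  have zero_iff: "\<kappa> i = 0 \<longleftrightarrow> i \<notin> A" if "i \<in> I" for i
    using assms(1) that by (force simp: copy_indices_def PiE_def Pi_def)
  have "\<kappa> d = 0" and "I - A = {i \<in> I. \<kappa> i = 0}"
    using d zero_iff by auto
  then have "I - A = kernel_on I \<kappa> `` {d}"
    using d by (auto simp: kernel_on_def)
  with d show ?thesis by (auto intro: quotientI)
qed simp

lemma equiv_class_subset_if_complement_class:
  assumes R: "equiv I R" and A: "A \<subseteq> I" "A = I \<or> I - A \<in> I // R" and j: "j \<in> A"
  shows "R `` {j} \<subseteq> A"
proof -
  have "R `` {j} \<in> I // R" and "j \<in> R `` {j}"
    using A(1) j equiv_class_self[OF R, of j] by (auto intro: quotientI)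
  then have "R `` {j} \<subseteq> I" and "A \<noteq> I \<Longrightarrow> R `` {j} \<inter> (I - A) = {}"
    using A(2) j in_quotient_imp_subset[OF R] quotient_disj[OF R] by blast+
  then show ?thesis by blast
qed

lemma equiv_class_in_classes_within:
  assumes R: "equiv I R" and A: "A \<subseteq> I" "A = I \<or> I - A \<in> I // R" and j: "j \<in> A"
  shows "R `` {j} \<in> {B \<in> I // R. B \<subseteq> A}"
  using equiv_class_subset_if_complement_class[OF assms] A(1) j by (auto intro: quotientI)

lemma equiv_class_eq_if_in_quotient:
  assumes R: "equiv I R" and "B \<in> I // R" and "j \<in> B"
  shows "R `` {j} = B"
proof -
  have "j \<in> I" using assms in_quotient_imp_subset by blast
  then show ?thesis
    using quotient_eqI[OF R quotientI assms(2) _ assms(3)] equiv_class_self[OF R] equivE[OF R]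
    by (meson refl_onD)
qed

lemma kernel_on_injection_labelling:
  assumes R: "equiv I R" and A: "A \<subseteq> I" "A = I \<or> I - A \<in> I // R"
    and c: "c \<in> injections {B \<in> I // R. B \<subseteq> A} m"
  shows "kernel_on I (\<lambda>j. if j \<in> A then c (R `` {j}) else 0) = R"
proof -
  note class_in = equiv_class_in_classes_within[OF R A]
  have pos: "c (R `` {j}) \<noteq> 0" if "j \<in> A" for j
    using c class_in[OF that] by (auto simp: injections_def PiE_def Pi_def)
  have same_class: "(c (R `` {i}) = c (R `` {j})) \<longleftrightarrow> (i, j) \<in> R" if "i \<in> A" "j \<in> A" for i j
  proof -
    have "(c (R `` {i}) = c (R `` {j})) \<longleftrightarrow> R `` {i} = R `` {j}"
      using c class_in that by (intro inj_on_eq_iff) (auto simp: injections_def)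
    also have "\<dots> \<longleftrightarrow> (i, j) \<in> R"
      using that A(1) by (intro eq_equiv_class_iff[OF R]) auto
    finally show ?thesis .
  qed
  have "(i, j) \<notin> R" "(j, i) \<notin> R" if "i \<in> A" "j \<in> I - A" for i j
    using that equiv_class_subset_if_complement_class[OF R A] equivE[OF R] by (auto dest: symD)
  moreover have "(i, j) \<in> R" if "i \<in> I - A" "j \<in> I - A" for i j
    using that A(2) in_quotient_imp_in_rel[OF R] by blast
  moreover define f where "f = (\<lambda>j. if j \<in> A then c (R `` {j}) else 0)"
  ultimately have "f i = f j \<longleftrightarrow> (i, j) \<in> R" if "i \<in> I" "j \<in> I" for i j
    using that pos same_class by (cases "i \<in> A"; cases "j \<in> A") (auto simp: f_def)
  then show ?thesis
    unfolding f_def[symmetric] using equiv_type[OF R] by (auto simp: kernel_on_def)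
qed

lemma class_labels_in_injections:
  assumes R: "equiv I R" and A: "A \<subseteq> I" "A = I \<or> I - A \<in> I // R"
    and \<kappa>: "\<kappa> \<in> PiE I (copy_indices A)" "kernel_on I \<kappa> = R"
  shows "(\<lambda>B\<in>{B \<in> I // R. B \<subseteq> A}. the_elem (\<kappa> ` B))
    \<in> injections {B \<in> I // R. B \<subseteq> A} (card A)"
proof -
  let ?T = "{B \<in> I // R. B \<subseteq> A}"
  have class_of: "\<exists>j\<in>A. B = R `` {j}" if "B \<in> ?T" for B
    using that equiv_class_self[OF R] by (auto elim!: quotientE)
  have label: "the_elem (\<kappa> ` (R `` {j})) = \<kappa> j" if "j \<in> A" for j
    using that A(1) the_elem_image_kernel_on_class[of j I \<kappa>] \<kappa>(2) by auto
  have "the_elem (\<kappa> ` B) \<in> {1..card A}" if B: "B \<in> ?T" for B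
  proof -
    obtain j where "j \<in> A" "B = R `` {j}" using class_of[OF B] by blast
    moreover have "\<kappa> j \<in> copy_indices A j" using \<kappa> \<open>j \<in> A\<close> A(1) by (blast intro: PiE_mem)
    ultimately show ?thesis using label by (simp add: copy_indices_def)
  qed
  moreover have "inj_on (\<lambda>B. the_elem (\<kappa> ` B)) ?T"
  proof (rule inj_onI)
    fix B1 B2 assume B: "B1 \<in> ?T" "B2 \<in> ?T" "the_elem (\<kappa> ` B1) = the_elem (\<kappa> ` B2)"
    then obtain j1 j2 where j: "j1 \<in> A" "B1 = R `` {j1}" "j2 \<in> A" "B2 = R `` {j2}"
      using class_of[OF B(1)] class_of[OF B(2)] by blast
    with B(3) label have "(j1, j2) \<in> R"
      using A(1) by (auto simp: \<kappa>(2)[symmetric] kernel_on_def)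
    with j show "B1 = B2" using equiv_class_eq_iff[OF R] by blast
  qed
  ultimately show ?thesis
    by (simp add: injections_def inj_on_restrict_eq)
qed

lemma bij_betw_injections_kernel_labellings:
  assumes R: "equiv I R" and A: "A \<subseteq> I" "A = I \<or> I - A \<in> I // R"
  shows "bij_betw (\<lambda>c. \<lambda>j\<in>I. if j \<in> A then c (R `` {j}) else 0)
    (injections {B \<in> I // R. B \<subseteq> A} (card A)) {\<kappa> \<in> PiE I (copy_indices A). kernel_on I \<kappa> = R}"
proof -
  let ?T = "{B \<in> I // R. B \<subseteq> A}"
  let ?K = "{\<kappa> \<in> PiE I (copy_indices A). kernel_on I \<kappa> = R}"
  define \<psi> :: "(nat set \<Rightarrow> nat) \<Rightarrow> nat \<Rightarrow> nat"
    where "\<psi> = (\<lambda>c. \<lambda>j\<in>I. if j \<in> A then c (R `` {j}) else 0)"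
  define \<phi> :: "(nat \<Rightarrow> nat) \<Rightarrow> nat set \<Rightarrow> nat"
    where "\<phi> = (\<lambda>\<kappa>. \<lambda>B\<in>?T. the_elem (\<kappa> ` B))"
  note class_in = equiv_class_in_classes_within[OF R A]
  have "\<phi> (\<psi> c) B = c B" if c: "c \<in> injections ?T (card A)" for c B
  proof (cases "B \<in> ?T")
    case True
    have "\<psi> c i = c B" if "i \<in> B" for i
      using True that equiv_class_eq_if_in_quotient[OF R] A(1) by (auto simp: \<psi>_def)
    moreover have "B \<noteq> {}" using True in_quotient_imp_non_empty[OF R] by blast
    ultimately have "\<psi> c ` B = {c B}" by (metis image_cong image_constant_conv)
    with True show ?thesis by (simp add: \<phi>_def)
  next
    case False
    with c show ?thesis by (auto simp: \<phi>_def injections_def PiE_def extensional_def)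
  qed
  moreover have "\<psi> (\<phi> \<kappa>) j = \<kappa> j" if "\<kappa> \<in> ?K" for \<kappa> j
    using that class_in A(1) the_elem_image_kernel_on_class[of j I \<kappa>]
    by (auto simp: \<phi>_def \<psi>_def PiE_def extensional_def Pi_def copy_indices_def)
  moreover have "\<psi> c \<in> ?K" if c: "c \<in> injections ?T (card A)" for c
  proof -
    have "c (R `` {j}) \<in> {1..card A}" if "j \<in> A" for j
      using c class_in[OF that] by (auto simp: injections_def)
    then show ?thesis
      using kernel_on_injection_labelling[OF R A c] by (auto simp: \<psi>_def copy_indices_def kernel_on_restrict)
  qed
  moreover have "\<phi> \<kappa> \<in> injections ?T (card A)" if "\<kappa> \<in> ?K" for \<kappa>
    using that class_labels_in_injections[OF R A] unfolding \<phi>_def by blast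
  ultimately have "bij_betw \<psi> (injections ?T (card A)) ?K"
    by (intro bij_betw_byWitness[where f' = \<phi>] ballI ext image_subsetI)
  then show ?thesis by (simp add: \<psi>_def)
qed

lemma sum_kernel_labellings_root_power:
  assumes I: "finite I" and R: "equiv I R"
    and A: "A \<subseteq> I" "A = I \<or> I - A \<in> I // R" "A \<noteq> {}"
    and w: "primitive_root_unity (card A) w"
  shows "(\<Sum>\<kappa>\<in>{\<kappa> \<in> PiE I (copy_indices A). kernel_on I \<kappa> = R}. w ^ (\<Sum>j\<in>A. \<kappa> j)) =
    (-1) ^ (card {B \<in> I // R. B \<subseteq> A} - 1) * fact (card {B \<in> I // R. B \<subseteq> A} - 1) * of_nat (card A)"
proof -
  define T where "T = {B \<in> I // R. B \<subseteq> A}"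
  let ?\<psi> = "\<lambda>c. \<lambda>j\<in>I. if j \<in> A then c (R `` {j}) else 0"
  have class_in: "R `` {j} \<in> T" if "j \<in> A" for j
    using equiv_class_in_classes_within[OF R A(1,2) that] by (simp add: T_def)
  have in_class: "j \<in> A \<and> R `` {j} = B" if "B \<in> T" "j \<in> B" for B j
    using that equiv_class_eq_if_in_quotient[OF R] by (auto simp: T_def)
  have finite_T: "finite T" and finite_class: "\<And>B. B \<in> T \<Longrightarrow> finite B"
    using I finite_quotient[OF I equiv_type[OF R]] finite_equiv_class[OF I equiv_type[OF R]]
    by (auto simp: T_def)
  have "A = \<Union>T"
    using class_in in_class equiv_class_self[OF R] A(1) by blast
  then have split_A: "(\<Sum>j\<in>A. g j) = (\<Sum>B\<in>T. \<Sum>j\<in>B. g j)" for g :: "nat \<Rightarrow> nat"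
  proof -
    have disjoint: "\<forall>B\<in>T. \<forall>B'\<in>T. B \<noteq> B' \<longrightarrow> B \<inter> B' = {}"
      using quotient_disj[OF R] by (auto simp: T_def)
    show ?thesis
      using sum.Union_disjoint[of T, OF _ disjoint, of g] finite_class \<open>A = \<Union>T\<close> by auto
  qed
  have "(\<Sum>\<kappa>\<in>{\<kappa> \<in> PiE I (copy_indices A). kernel_on I \<kappa> = R}. w ^ (\<Sum>j\<in>A. \<kappa> j)) =
      (\<Sum>c\<in>injections T (card A). w ^ (\<Sum>j\<in>A. ?\<psi> c j))"
    by (rule sum.reindex_bij_betw[symmetric, OF bij_betw_injections_kernel_labellings[OF R A(1,2), folded T_def]])
  also have "\<dots> = (\<Sum>c\<in>injections T (card A). w ^ (\<Sum>B\<in>T. card B * c B))"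
  proof -
    have "(\<Sum>j\<in>B. ?\<psi> c j) = card B * c B" if "B \<in> T" for B c
    proof -
      have "(\<Sum>j\<in>B. ?\<psi> c j) = (\<Sum>j\<in>B. c B)"
        using in_class[OF that] A(1) by (intro sum.cong) auto
      then show ?thesis by simp
    qed
    then have "(\<Sum>j\<in>A. ?\<psi> c j) = (\<Sum>B\<in>T. card B * c B)" for c
      unfolding split_A by (intro sum.cong) auto
    then show ?thesis by simp
  qed
  also have "\<dots> = (-1) ^ (card T - 1) * fact (card T - 1) * of_nat (card A)"
  proof (rule sum_injections_weighted_root_power[OF w finite_T])
    show "card T = Suc (card T - 1)"
      using A(3) class_in finite_T by (metis Suc_pred' card_gt_0_iff empty_iff ex_in_conv)
    show "\<forall>B\<in>T. 0 < card B"
      using finite_class in_quotient_imp_non_empty[OF R] by (auto simp: T_def card_gt_0_iff)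
    show "(\<Sum>B\<in>T. card B) = card A"
      using split_A[of "\<lambda>_. 1"] by simp
  qed
  finally show ?thesis by (simp add: T_def)
qed

lemma classes_subset_diff_class:
  assumes R: "equiv I R" and D: "D \<in> I // R"
  shows "{B \<in> I // R. B \<subseteq> I - D} = I // R - {D}"
proof -
  have "B \<subseteq> I - D \<longleftrightarrow> B \<noteq> D" if B: "B \<in> I // R" for B
  proof
    assume "B \<subseteq> I - D"
    then show "B \<noteq> D" using in_quotient_imp_non_empty[OF R B] by blast
  next
    assume "B \<noteq> D"
    then show "B \<subseteq> I - D" using quotient_disj[OF R B D] in_quotient_imp_subset[OF R B] by blast
  qed
  then show ?thesis by blast
qed

lemma card_quotient_eq_1_iff:
  assumes R: "equiv I R" and "I \<noteq> {}"
  shows "card (I // R) = 1 \<longleftrightarrow> R = I \<times> I"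
proof
  assume "card (I // R) = 1"
  then obtain D where D: "I // R = {D}" by (rule card_1_singletonE)
  have "(x, y) \<in> R" if "x \<in> I" "y \<in> I" for x y
  proof -
    have "R `` {x} \<in> {D}" "R `` {y} \<in> {D}"
      using that quotientI[of _ I R] unfolding D[symmetric] by auto
    then have "R `` {x} = R `` {y}" by simp
    then show ?thesis using that eq_equiv_class_iff[OF R] by blast
  qed
  then show "R = I \<times> I" using equiv_type[OF R] by auto
next
  assume "R = I \<times> I"
  then have "R `` {x} = I" if "x \<in> I" for x using that by auto
  then have "I // R = {I}"
    using assms(2) unfolding quotient_def by blast
  then show "card (I // R) = 1" by simp
qed

lemma alternating_fact_sum:
  assumes "1 \<le> s"
  shows "(-1) ^ (s - 1) * fact (s - 1) + of_nat (s - 1) * ((-1) ^ (s - 2) * fact (s - 2)) =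
    (if s = 1 then 1 else 0 :: 'a::{comm_ring_1, ring_char_0})"
proof (cases "s = 1")
  case False
  with assms obtain t where "s = Suc (Suc t)" by (metis Suc_diff_le diff_Suc_1 le_antisym not_less_eq_eq)
  then show ?thesis by (simp add: algebra_simps)
qed simp

lemma normalized_sum_kernel_labellings_root_power:
  assumes I: "finite I" and R: "equiv I R" and A: "A \<subseteq> I" "A \<noteq> {}"
    and w: "primitive_root_unity (card A) w"
  shows "(\<Sum>\<kappa>\<in>{\<kappa> \<in> PiE I (copy_indices A). kernel_on I \<kappa> = R}.
      1 / of_nat (card A) * w ^ (\<Sum>j\<in>A. \<kappa> j)) =
    (if A = I \<or> I - A \<in> I // R
     then (-1) ^ (card {B \<in> I // R. B \<subseteq> A} - 1) * fact (card {B \<in> I // R. B \<subseteq> A} - 1) else 0)"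
proof (cases "A = I \<or> I - A \<in> I // R")
  case True
  moreover have "card A \<noteq> 0" using A I by (auto simp: finite_subset)
  ultimately show ?thesis
    using sum_kernel_labellings_root_power[OF I R A(1) _ A(2) w]
    by (simp add: sum_distrib_left[symmetric] del: times_divide_eq_left) simp
next
  case False
  then have "{\<kappa> \<in> PiE I (copy_indices A). kernel_on I \<kappa> = R} = {}"
    using copy_indices_complement_class[OF _ A(1)] by blast
  with False show ?thesis by (simp only: sum.empty if_False)
qed

lemma sum_subsets_complement_class:
  fixes f :: "'a set \<Rightarrow> 'b::comm_monoid_add"
  assumes I: "finite I" "p \<in> I" and R: "equiv I R"
  shows "(\<Sum>A | A \<subseteq> I \<and> p \<in> A. if A = I \<or> I - A \<in> I // R then f A else 0) =
    f I + (\<Sum>D\<in>I // R - {R `` {p}}. f (I - D))"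
proof -
  define Ds where "Ds = I // R - {R `` {p}}"
  have Ds: "D \<in> Ds \<longleftrightarrow> D \<in> I // R \<and> p \<notin> D" for D
    using I(2) equiv_class_self[OF R] equiv_class_eq_if_in_quotient[OF R]
    by (auto simp: Ds_def intro: quotientI)
  have D: "D \<noteq> {}" "D \<subseteq> I" if "D \<in> Ds" for D
    using that in_quotient_imp_non_empty[OF R] in_quotient_imp_subset[OF R] by (auto simp: Ds)
  have admissible: "insert I ((\<lambda>D. I - D) ` Ds) = {A. A \<subseteq> I \<and> p \<in> A \<and> (A = I \<or> I - A \<in> I // R)}"
    using I(2) D by (auto simp: Ds double_diff image_iff intro!: exI[of _ "I - A" for A])
  have "(\<Sum>A | A \<subseteq> I \<and> p \<in> A. if A = I \<or> I - A \<in> I // R then f A else 0) =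
      (\<Sum>A\<in>insert I ((\<lambda>D. I - D) ` Ds). f A)"
    unfolding admissible using I(1) by (simp add: sum.If_cases Int_def conj_ac)
  also have "\<dots> = f I + (\<Sum>D\<in>Ds. f (I - D))"
  proof -
    have "I \<notin> (\<lambda>D. I - D) ` Ds" and "inj_on (\<lambda>D. I - D) Ds"
      using D by (fastforce, auto simp: inj_on_def double_diff)
    moreover have "finite Ds"
      using finite_quotient[OF I(1) equiv_type[OF R]] by (simp add: Ds_def)
    ultimately show ?thesis by (simp add: sum.reindex)
  qed
  finally show ?thesis by (simp add: Ds_def)
qed

lemma sum_subsets_kernel_labellings_root_power:
  fixes \<omega> :: "nat set \<Rightarrow> complex"
  assumes I: "finite I" "p \<in> I" and R: "equiv I R"
    and \<omega>: "\<And>A. A \<subseteq> I \<Longrightarrow> p \<in> A \<Longrightarrow> primitive_root_unity (card A) (\<omega> A)"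
  shows "(\<Sum>A | A \<subseteq> I \<and> p \<in> A. \<Sum>\<kappa>\<in>{\<kappa> \<in> PiE I (copy_indices A). kernel_on I \<kappa> = R}.
      1 / of_nat (card A) * \<omega> A ^ (\<Sum>j\<in>A. \<kappa> j)) = (if R = I \<times> I then 1 else 0)"
proof -
  define s where "s = card (I // R)"
  define r where "r A = card {B \<in> I // R. B \<subseteq> A}" for A
  define g :: "nat \<Rightarrow> complex" where "g k = (-1) ^ (k - 1) * fact (k - 1)" for k
  have finite_quotient: "finite (I // R)"
    using finite_quotient[OF I(1) equiv_type[OF R]] .
  have "(\<Sum>A | A \<subseteq> I \<and> p \<in> A. \<Sum>\<kappa>\<in>{\<kappa> \<in> PiE I (copy_indices A). kernel_on I \<kappa> = R}.
      1 / of_nat (card A) * \<omega> A ^ (\<Sum>j\<in>A. \<kappa> j)) =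
      (\<Sum>A | A \<subseteq> I \<and> p \<in> A. if A = I \<or> I - A \<in> I // R then g (r A) else 0)"
  proof (intro sum.cong refl)
    fix A assume "A \<in> {A. A \<subseteq> I \<and> p \<in> A}"
    then have A: "A \<subseteq> I" "p \<in> A" "A \<noteq> {}" by auto
    show "(\<Sum>\<kappa>\<in>{\<kappa> \<in> PiE I (copy_indices A). kernel_on I \<kappa> = R}.
        1 / of_nat (card A) * \<omega> A ^ (\<Sum>j\<in>A. \<kappa> j)) =
        (if A = I \<or> I - A \<in> I // R then g (r A) else 0)"
      unfolding g_def r_def
      by (rule normalized_sum_kernel_labellings_root_power[OF I(1) R A(1,3) \<omega>[OF A(1,2)]])
  qed
  also have "\<dots> = g (r I) + (\<Sum>D\<in>I // R - {R `` {p}}. g (r (I - D)))"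
    by (rule sum_subsets_complement_class[OF I R])
  also have "\<dots> = (-1) ^ (s - 1) * fact (s - 1) + of_nat (s - 1) * ((-1) ^ (s - 2) * fact (s - 2))"
  proof -
    have "r I = s"
      using in_quotient_imp_subset[OF R] by (auto simp: r_def s_def intro!: arg_cong[where f = card])
    moreover have "r (I - D) = s - 1" if "D \<in> I // R" for D
      using that finite_quotient by (simp add: r_def s_def classes_subset_diff_class[OF R])
    moreover have "card (I // R - {R `` {p}}) = s - 1"
      using finite_quotient I(2) by (simp add: s_def quotientI)
    ultimately show ?thesis by (simp add: g_def numeral_2_eq_2)
  qed
  also have "\<dots> = (if R = I \<times> I then 1 else 0)"
  proof -
    have "1 \<le> s" using finite_quotient I(2) by (auto simp: s_def Suc_le_eq card_gt_0_iff)
    moreover have "s = 1 \<longleftrightarrow> R = I \<times> I"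
      using card_quotient_eq_1_iff[OF R] I(2) by (auto simp: s_def)
    ultimately show ?thesis
      unfolding alternating_fact_sum[OF \<open>1 \<le> s\<close>] by simp
  qed
  finally show ?thesis .
qed

lemma sum_kernel_invariant_eq:
  fixes P :: "('a \<Rightarrow> 'b) \<Rightarrow> 'c::comm_semiring_1"
  assumes I: "finite I" and S: "finite S" and K: "\<And>s. s \<in> S \<Longrightarrow> finite (K s)"
    and P: "\<And>\<kappa> \<kappa>'. kernel_on I \<kappa> = kernel_on I \<kappa>' \<Longrightarrow> P \<kappa> = P \<kappa>'"
    and w: "\<And>R. equiv I R \<Longrightarrow>
      (\<Sum>s\<in>S. \<Sum>\<kappa>\<in>{\<kappa> \<in> K s. kernel_on I \<kappa> = R}. w s \<kappa>) = (if R = I \<times> I then 1 else 0)"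
  shows "(\<Sum>s\<in>S. \<Sum>\<kappa>\<in>K s. w s \<kappa> * P \<kappa>) = P (\<lambda>_. c)"
proof -
  define Q where "Q R = P (inv (kernel_on I) R)" for R
  have P_Q: "P \<kappa> = Q (kernel_on I \<kappa>)" for \<kappa>
    unfolding Q_def by (rule P) (simp add: f_inv_into_f)
  have finite_equivs: "finite {R. equiv I R}"
    by (rule finite_subset[of _ "Pow (I \<times> I)"]) (auto dest: equiv_type simp: I)
  have "(\<Sum>s\<in>S. \<Sum>\<kappa>\<in>K s. w s \<kappa> * P \<kappa>) =
      (\<Sum>s\<in>S. \<Sum>R\<in>{R. equiv I R}. \<Sum>\<kappa>\<in>{\<kappa> \<in> K s. kernel_on I \<kappa> = R}. w s \<kappa> * Q R)"
  proof (intro sum.cong refl)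
    fix s assume "s \<in> S"
    then have "(\<Sum>\<kappa>\<in>K s. w s \<kappa> * P \<kappa>) =
        (\<Sum>R\<in>{R. equiv I R}. \<Sum>\<kappa>\<in>{\<kappa> \<in> K s. kernel_on I \<kappa> = R}. w s \<kappa> * P \<kappa>)"
      using K finite_equivs equiv_kernel_on by (intro sum.group[symmetric]) auto
    then show "(\<Sum>\<kappa>\<in>K s. w s \<kappa> * P \<kappa>) =
        (\<Sum>R\<in>{R. equiv I R}. \<Sum>\<kappa>\<in>{\<kappa> \<in> K s. kernel_on I \<kappa> = R}. w s \<kappa> * Q R)"
      by (simp add: P_Q)
  qed
  also have "\<dots> =
      (\<Sum>R\<in>{R. equiv I R}. Q R * (\<Sum>s\<in>S. \<Sum>\<kappa>\<in>{\<kappa> \<in> K s. kernel_on I \<kappa> = R}. w s \<kappa>))"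
    by (subst sum.swap) (simp add: sum_distrib_left sum_distrib_right mult.commute)
  also have "\<dots> = (\<Sum>R\<in>{R. equiv I R}. if R = I \<times> I then Q R else 0)"
    using w by (intro sum.cong refl) auto
  also have "\<dots> = Q (kernel_on I (\<lambda>_. c))"
    using finite_equivs equiv_kernel_on[of I "\<lambda>_. c"] by (simp add: kernel_on_const)
  finally show ?thesis by (simp add: P_Q)
qed

section \<open>Moments of the copies\<close>

lemma prod_list_map_scale:
  assumes "complex_unital_algebra sc"
  shows "prod_list (map (\<lambda>j. sc (a j) (y j)) js) = sc (prod_list (map a js)) (prod_list (map y js))"
proof -
  interpret vector_space sc using assms by (simp add: complex_unital_algebra_def)
  have "sc c (x * z) = sc c x * z" "sc c (x * z) = x * sc c z" for c x z
    using assms unfolding complex_unital_algebra_def by blast+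
  then have "sc b x * sc c z = sc (b * c) (x * z)" for b c x z
    by (metis scale_scale)
  then show ?thesis
    by (induction js) simp_all
qed

lemma prod_list_map_multiplicative:
  assumes "\<And>a b. f (a * b) = f a * f b" and "f 1 = 1"
  shows "f (prod_list (map X js)) = prod_list (map (\<lambda>j. f (X j)) js)"
  by (induction js) (simp_all add: assms)

lemma prod_list_XA_expansion:
  assumes "complex_unital_algebra scU" and "distinct js" and "A \<subseteq> set js"
  shows "prod_list (map (\<lambda>j. XA scU iota A w (X j) j) js) =
    (\<Sum>\<kappa>\<in>PiE (set js) (copy_indices A).
       scU (w ^ (\<Sum>j\<in>A. \<kappa> j)) (prod_list (map (\<lambda>j. iota (\<kappa> j) (X j)) js)))"
proof -
  interpret vector_space scU using assms(1) by (simp add: complex_unital_algebra_def)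
  define a where "a j k = (if j \<in> A then w ^ k else 1)" for j k
  have "XA scU iota A w (X j) j = (\<Sum>k\<in>copy_indices A j. scU (a j k) (iota k (X j)))" for j
    by (simp add: XA_def copy_indices_def a_def)
  then have "prod_list (map (\<lambda>j. XA scU iota A w (X j) j) js) =
      (\<Sum>\<kappa>\<in>PiE (set js) (copy_indices A).
         scU (prod_list (map (\<lambda>j. a j (\<kappa> j)) js)) (prod_list (map (\<lambda>j. iota (\<kappa> j) (X j)) js)))"
    by (simp add: prod_list_map_sum_distrib[OF assms(2)] prod_list_map_scale[OF assms(1)])
  moreover have "prod_list (map (\<lambda>j. a j (\<kappa> j)) js) = w ^ (\<Sum>j\<in>A. \<kappa> j)" for \<kappa>
  proof -
    have "prod_list (map (\<lambda>j. a j (\<kappa> j)) js) = (\<Prod>j\<in>set js \<inter> A. w ^ \<kappa> j)"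
      by (simp add: prod.distinct_set_conv_list[OF assms(2), symmetric] prod.inter_restrict a_def)
    also have "\<dots> = w ^ (\<Sum>j\<in>A. \<kappa> j)"
      using assms(3) by (simp add: power_sum Int_absorb1)
    finally show ?thesis .
  qed
  ultimately show ?thesis by simp
qed

lemma moment_XA_expansion:
  assumes "nc_prob_space scU phit" and "distinct js" and "A \<subseteq> set js"
  shows "phit (prod_list (map (\<lambda>j. XA scU iota A w (X j) j) js)) =
    (\<Sum>\<kappa>\<in>PiE (set js) (copy_indices A).
       w ^ (\<Sum>j\<in>A. \<kappa> j) * phit (prod_list (map (\<lambda>j. iota (\<kappa> j) (X j)) js)))"
proof -
  have U: "complex_unital_algebra scU" and "Vector_Spaces.linear scU (*) phit"
    using assms(1) by (simp_all add: nc_prob_space_def)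
  then interpret phit: Vector_Spaces.linear scU "(*)" phit by simp
  show ?thesis
    unfolding prod_list_XA_expansion[OF U assms(2,3)] by (simp only: phit.sum phit.scale)
qed

lemma moment_eq_moment_copy:
  assumes "exchangeability_system scA phi scU phit iota"
  shows "phi (prod_list (map X js)) = phit (prod_list (map (\<lambda>j. iota k (X j)) js))"
proof -
  have "unital_alg_embedding scA scU (iota k)" and "phit \<circ> iota k = phi"
    using assms by (simp_all add: exchangeability_system_def)
  then show ?thesis
    unfolding unital_alg_embedding_def by (metis comp_apply prod_list_map_multiplicative)
qed

lemma exchangeable_prod_list_kernel_invariant:
  assumes exch: "exchangeability_system scA phi scU phit iota"
    and ker: "kernel_on (set js) \<kappa> = kernel_on (set js) \<kappa>'"
  shows "phit (prod_list (map (\<lambda>j. iota (\<kappa> j) (X j)) js)) =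
    phit (prod_list (map (\<lambda>j. iota (\<kappa>' j) (X j)) js))"
proof -
  define f where "f v = \<kappa>' (inv_into (set js) \<kappa> v)" for v
  have same: "\<kappa> i = \<kappa> j \<longleftrightarrow> \<kappa>' i = \<kappa>' j" if "i \<in> set js" "j \<in> set js" for i j
    using ker that unfolding kernel_on_def by blast
  have f: "f (\<kappa> j) = \<kappa>' j" if "j \<in> set js" for j
    using same[OF inv_into_into[of "\<kappa> j" \<kappa>] that] that by (simp add: f_def f_inv_into_f)
  have inj: "inj_on f (\<kappa> ` set js)"
    by (rule inj_onI) (auto simp: f same)
  obtain \<sigma> where "bij \<sigma>" and \<sigma>: "\<And>v. v \<in> \<kappa> ` set js \<Longrightarrow> \<sigma> v = f v"
    by (rule inj_on_extends_to_bij[OF _ inj]) auto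
  have reindex: "map g js = map (\<lambda>i. g (js ! i)) [0..<length js]" for g :: "_ \<Rightarrow> 'u"
    using arg_cong[OF map_nth[of js], of "map g"] by (simp add: comp_def)
  have "phit (prod_list (map (\<lambda>j. iota (\<kappa> j) (X j)) js)) =
      phit (prod_list (map (\<lambda>j. iota (\<sigma> (\<kappa> j)) (X j)) js))"
    using exch[unfolded exchangeability_system_def, THEN conjunct2, THEN conjunct2, rule_format,
        where n = "length js" and X = "\<lambda>i. X (js ! i)" and i = "\<lambda>i. \<kappa> (js ! i)"] \<open>bij \<sigma>\<close>
    unfolding reindex by simp
  also have "\<dots> = phit (prod_list (map (\<lambda>j. iota (\<kappa>' j) (X j)) js))"
    using \<sigma> f by (simp cong: map_cong)
  finally show ?thesis .
qed

theorem proposition3p9: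
  fixes scA :: "complex \<Rightarrow> 'a::ring_1 \<Rightarrow> 'a" and phi :: "'a \<Rightarrow> complex"
    and scU :: "complex \<Rightarrow> 'u::ring_1 \<Rightarrow> 'u" and phit :: "'u \<Rightarrow> complex"
    and iota :: "nat \<Rightarrow> 'a \<Rightarrow> 'u"
    and X :: "nat \<Rightarrow> 'a" and n :: nat
    and \<omega> :: "nat set \<Rightarrow> complex"
  assumes "nc_prob_space scA phi"
    and "exchangeability_system scA phi scU phit iota"
    and "n \<ge> 1"
    and "\<And>A. A \<subseteq> {1..n} \<Longrightarrow> 1 \<in> A \<Longrightarrow> primitive_root_unity (card A) (\<omega> A)"
  shows "phi (prod_list (map X [1..<n+1])) =
    (\<Sum>A | A \<subseteq> {1..n} \<and> 1 \<in> A.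
       (1 / of_nat (card A)) * phit (prod_list (map (\<lambda>j. XA scU iota A (\<omega> A) (X j) j) [1..<n+1])))"
proof -
  have js: "set [1..<n+1] = {1..n}" by auto
  define P where "P \<kappa> = phit (prod_list (map (\<lambda>j. iota (\<kappa> j) (X j)) [1..<n+1]))" for \<kappa>
  have U: "nc_prob_space scU phit" using assms(2) by (simp add: exchangeability_system_def)
  have "phi (prod_list (map X [1..<n+1])) = P (\<lambda>_. 0)"
    unfolding P_def by (rule moment_eq_moment_copy[OF assms(2)])
  also have "\<dots> = (\<Sum>A | A \<subseteq> {1..n} \<and> 1 \<in> A. \<Sum>\<kappa>\<in>PiE {1..n} (copy_indices A).
      1 / of_nat (card A) * \<omega> A ^ (\<Sum>j\<in>A. \<kappa> j) * P \<kappa>)"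
  proof (rule sym, rule sum_kernel_invariant_eq)
    show "P \<kappa> = P \<kappa>'" if "kernel_on {1..n} \<kappa> = kernel_on {1..n} \<kappa>'" for \<kappa> \<kappa>'
      using exchangeable_prod_list_kernel_invariant[OF assms(2)] that unfolding P_def js[symmetric] by blast
  qed (use sum_subsets_kernel_labellings_root_power[OF _ _ _ assms(4)] assms(3)
      in \<open>auto intro: finite_PiE simp: copy_indices_def\<close>)
  also have "\<dots> = (\<Sum>A | A \<subseteq> {1..n} \<and> 1 \<in> A.
      (1 / of_nat (card A)) * phit (prod_list (map (\<lambda>j. XA scU iota A (\<omega> A) (X j) j) [1..<n+1])))"
  proof (intro sum.cong refl)
    fix A assume "A \<in> {A. A \<subseteq> {1..n} \<and> 1 \<in> A}"
    then have "A \<subseteq> set [1..<n+1]" by (simp only: js) simp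
    then show "(\<Sum>\<kappa>\<in>PiE {1..n} (copy_indices A).
          1 / of_nat (card A) * \<omega> A ^ (\<Sum>j\<in>A. \<kappa> j) * P \<kappa>) =
        1 / of_nat (card A) * phit (prod_list (map (\<lambda>j. XA scU iota A (\<omega> A) (X j) j) [1..<n+1]))"
      by (simp only: moment_XA_expansion[OF U distinct_upt] js P_def sum_distrib_left mult.assoc)
  qed
  finally show ?thesis .
qed

end
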